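(* Let $K_{1,n}$ be the star graph with $n+1$ vertices and $n$ edges. Then $\mathcal{P}_d(\mathcal{E}_{K_{1,n}})=\emptyset$ for every $d\geq n+1$.
   Context: Work over an algebraically closed field $k$. The Fomin–Kirillov algebra $\mathcal{E}_m$ is the graded $k$-algebra generated by degree-$1$ elements $x_{ij}$, $1\leq i<j\leq m$, subject to: $x_{ij}^2=0$; $x_{ij}x_{kl}=x_{kl}x_{ij}$ whenever $\{i,j\}\cap\{k,l\}=\emptyset$; $x_{ij}x_{jk}-x_{jk}x_{ik}-x_{ik}x_{ij}=0$ and $x_{jk}x_{ij}-x_{ik}x_{jk}-x_{ij}x_{ik}=0$ for $i<j<k$. For a graph $G$ on vertex set $\{1,\dots,m\}$, $\mathcal{E}_G$ is the subalgebra of $\mathcal{E}_m$ generated by the $x_{ij}$ with $\{i,j\}$ an edge of $G$; here $K_{1,n}$ is viewed as a graph on $n+1$ labelled vertices (one centre joined to the other $n$). A degree-$d$ truncated point module over a connected graded algebra $A$ generated in degree $1$ is a graded cyclic module generated in degree $0$ with Hilbert series $1+t+\cdots+t^d$; $\mathcal{P}_d(A)$ is the space of such modules. *)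

theory Defs
  imports "HOL-Computational_Algebra.Polynomial"
begin

definition alg_closed :: "'k::field itself \<Rightarrow> bool" where
  "alg_closed _ \<longleftrightarrow> (\<forall>p :: 'k poly. degree p > 0 \<longrightarrow> (\<exists>x. poly p x = 0))"

text \<open>A noncommutative polynomial is a function from words (lists of generators)
  to coefficients; the word x1 x2 ... xr is the list [x1, x2, ..., xr].\<close>

type_synonym ('g, 'k) ncpoly = "'g list \<Rightarrow> 'k"

definition mono :: "'g list \<Rightarrow> ('g, 'k::field) ncpoly" where
  "mono w = (\<lambda>u. if u = w then 1 else 0)"

definition padd :: "('g, 'k::field) ncpoly \<Rightarrow> ('g, 'k) ncpoly \<Rightarrow> ('g, 'k) ncpoly" where
  "padd p q = (\<lambda>w. p w + q w)"

definition psub :: "('g, 'k::field) ncpoly \<Rightarrow> ('g, 'k) ncpoly \<Rightarrow> ('g, 'k) ncpoly" where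
  "psub p q = (\<lambda>w. p w - q w)"

definition psmult :: "'k::field \<Rightarrow> ('g, 'k) ncpoly \<Rightarrow> ('g, 'k) ncpoly" where
  "psmult c p = (\<lambda>w. c * p w)"

definition pmul :: "('g, 'k::field) ncpoly \<Rightarrow> ('g, 'k) ncpoly \<Rightarrow> ('g, 'k) ncpoly" where
  "pmul p q = (\<lambda>w. \<Sum>i\<in>{0..length w}. p (take i w) * q (drop i w))"

inductive_set two_sided_ideal :: "('g, 'k::field) ncpoly set \<Rightarrow> ('g, 'k) ncpoly set"
  for R where
    zero: "(\<lambda>_. 0) \<in> two_sided_ideal R"
  | gen: "r \<in> R \<Longrightarrow> pmul (pmul (psmult c (mono u)) r) (mono v) \<in> two_sided_ideal R"
  | add: "p \<in> two_sided_ideal R \<Longrightarrow> q \<in> two_sided_ideal R \<Longrightarrow> padd p q \<in> two_sided_ideal R"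

text \<open>Generator x_ij (1 \<le> i < j \<le> m) is represented by the pair (i,j).\<close>

definition fk_gens :: "nat \<Rightarrow> (nat \<times> nat) set" where
  "fk_gens m = {(i, j). 1 \<le> i \<and> i < j \<and> j \<le> m}"

definition fk_rels :: "nat \<Rightarrow> (nat \<times> nat, 'k::field) ncpoly set" where
  "fk_rels m =
     {mono [(i, j), (i, j)] | i j. (i, j) \<in> fk_gens m}
   \<union> {psub (mono [(i, j), (k, l)]) (mono [(k, l), (i, j)]) | i j k l.
        (i, j) \<in> fk_gens m \<and> (k, l) \<in> fk_gens m \<and> {i, j} \<inter> {k, l} = {}}
   \<union> {psub (psub (mono [(i, j), (j, k)]) (mono [(j, k), (i, k)])) (mono [(i, k), (i, j)]) | i j k.
        1 \<le> i \<and> i < j \<and> j < k \<and> k \<le> m}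
   \<union> {psub (psub (mono [(j, k), (i, j)]) (mono [(i, k), (j, k)])) (mono [(i, j), (i, k)]) | i j k.
        1 \<le> i \<and> i < j \<and> j < k \<and> k \<le> m}"

definition fk_ideal :: "nat \<Rightarrow> (nat \<times> nat, 'k::field) ncpoly set" where
  "fk_ideal m = two_sided_ideal (fk_rels m)"

definition free_alg :: "'g set \<Rightarrow> ('g, 'k::field) ncpoly set" where
  "free_alg E = {f. finite {w. f w \<noteq> 0} \<and> (\<forall>w. f w \<noteq> 0 \<longrightarrow> set w \<subseteq> E)}"

text \<open>The subalgebra E_G of E_m generated by the x_e, e \<in> E, is the image of
  free_alg E in E_m = free_alg / J_m, i.e. free_alg E / (free_alg E \<inter> J_m).
  This is its ideal of relations.\<close>

definition subalg_rel_ideal :: "nat \<Rightarrow> (nat \<times> nat) set \<Rightarrow> (nat \<times> nat, 'k::field) ncpoly set" where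
  "subalg_rel_ideal m E = free_alg E \<inter> fk_ideal m"

text \<open>K_{1,n} on vertices 1..n+1 with centre c; edge {c,v} corresponds to x_{min,max}.\<close>

definition star_edges :: "nat \<Rightarrow> nat \<Rightarrow> (nat \<times> nat) set" where
  "star_edges n c = {(min c v, max c v) | v. v \<in> {1..n+1} \<and> v \<noteq> c}"

text \<open>A graded module with Hilbert series 1 + t + ... + t^d: M = k^{d+1}, coordinate i
  being the degree-i component M_i (one-dimensional). A degree-1 generator x_e acts by a
  degree-1 linear map M_i \<rightarrow> M_{i+1}, i.e. by a scalar a i e (and kills M_d).\<close>

definition Mspace :: "nat \<Rightarrow> (nat \<Rightarrow> 'k::field) set" where
  "Mspace d = {v. \<forall>i>d. v i = 0}"

definition gen_act :: "(nat \<Rightarrow> 'g \<Rightarrow> 'k::field) \<Rightarrow> nat \<Rightarrow> 'g \<Rightarrow> (nat \<Rightarrow> 'k) \<Rightarrow> (nat \<Rightarrow> 'k)" where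
  "gen_act a d x v = (\<lambda>j. if j = 0 \<or> j > d then 0 else a (j - 1) x * v (j - 1))"

definition word_act :: "(nat \<Rightarrow> 'g \<Rightarrow> 'k::field) \<Rightarrow> nat \<Rightarrow> 'g list \<Rightarrow> (nat \<Rightarrow> 'k) \<Rightarrow> (nat \<Rightarrow> 'k)" where
  "word_act a d w v = foldr (gen_act a d) w v"

definition poly_act :: "(nat \<Rightarrow> 'g \<Rightarrow> 'k::field) \<Rightarrow> nat \<Rightarrow> ('g, 'k) ncpoly \<Rightarrow> (nat \<Rightarrow> 'k) \<Rightarrow> (nat \<Rightarrow> 'k)" where
  "poly_act a d f v = (\<lambda>j. \<Sum>w\<in>{w. f w \<noteq> 0}. f w * word_act a d w v j)"

definition deg0_gen :: "nat \<Rightarrow> 'k::field" where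
  "deg0_gen = (\<lambda>j. if j = 0 then 1 else 0)"

text \<open>a defines a degree-d truncated point module over E_G (G with edge set E in E_m):
  the action of the free algebra on E factors through E_G (the relations act by 0),
  and M is cyclic, generated by the degree-0 element.\<close>

definition truncated_point_module ::
  "nat \<Rightarrow> (nat \<times> nat) set \<Rightarrow> nat \<Rightarrow> (nat \<Rightarrow> nat \<times> nat \<Rightarrow> 'k::field) \<Rightarrow> bool" where
  "truncated_point_module m E d a \<longleftrightarrow>
     (\<forall>f \<in> subalg_rel_ideal m E. \<forall>v \<in> Mspace d. poly_act a d f v = (\<lambda>_. 0)) \<and>
     (\<forall>v \<in> Mspace d. \<exists>f \<in> free_alg E. v = poly_act a d f deg0_gen)"

text \<open>P_d(E_G): all such module structures (emptiness is independent of taking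
  isomorphism classes).\<close>

definition point_modules :: "'k::field itself \<Rightarrow> nat \<Rightarrow> (nat \<times> nat) set \<Rightarrow> nat \<Rightarrow> (nat \<Rightarrow> nat \<times> nat \<Rightarrow> 'k) set" where
  "point_modules _ m E d = {a. truncated_point_module m E d a}"

end

theory Submission
  imports Defs "HOL-Library.Function_Algebras"
begin

text \<open>In a truncated point module \<open>M = M_0 \<oplus> ... \<oplus> M_d\<close> over the star algebra, every
  generator \<open>x_cu\<close> maps \<open>M_s\<close> to \<open>M_(s+1)\<close> by a scalar, and cyclicity forces some leaf
  \<open>u\<close> to act nontrivially at every step \<open>s < d\<close>. For distinct leaves \<open>v_1, ..., v_k\<close> the
  Fomin--Kirillov relations imply the cyclic relation
  \<open>\<Sum>_j x_(c v_(j+1)) x_(c v_(j+2)) ... x_(c v_(j+k+1)) = 0\<close> (indices mod \<open>k\<close>), by induction on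
  \<open>k\<close> from the three-term and commutation relations. If a leaf \<open>v\<close> acted nontrivially at
  steps \<open>i\<close> and \<open>i + k\<close> with \<open>k\<close> minimal, the leaves used at the steps in between would
  be distinct and different from \<open>v\<close>, and the cyclic relation for this cycle, applied to
  \<open>M_i\<close>, would have exactly one nonzero term. So the leaves used at the steps
  \<open>0, ..., d - 1\<close> are pairwise distinct, and \<open>d \<le> n\<close>.\<close>

lemma sum_fun_apply: "(sum f A) x = (\<Sum>j\<in>A. f j x)"
  by (induction A rule: infinite_finite_induct) auto

section \<open>Multiplication by words in the free algebra\<close>

definition lmult :: "'g list \<Rightarrow> ('g, 'k::field) ncpoly \<Rightarrow> ('g, 'k) ncpoly" where
  "lmult u p = (\<lambda>w. if take (length u) w = u then p (drop (length u) w) else 0)"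

definition rmult :: "('g, 'k::field) ncpoly \<Rightarrow> 'g list \<Rightarrow> ('g, 'k) ncpoly" where
  "rmult p v = (\<lambda>w. if drop (length w - length v) w = v then p (take (length w - length v) w) else 0)"

lemma lmult_append [simp]: "lmult u p (u @ z) = p z"
  by (simp add: lmult_def)

lemma rmult_append [simp]: "rmult p v (z @ v) = p z"
  by (simp add: rmult_def)

lemma lmult_not_prefix: "(\<And>z. w \<noteq> u @ z) \<Longrightarrow> lmult u p w = 0"
  by (metis append_take_drop_id lmult_def)

lemma rmult_not_suffix: "(\<And>z. w \<noteq> z @ v) \<Longrightarrow> rmult p v w = 0"
  by (metis append_take_drop_id rmult_def)

lemma lmult_lmult: "lmult u (lmult u' p) = lmult (u @ u') p"
proof
  fix w
  show "lmult u (lmult u' p) w = lmult (u @ u') p w"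
  proof (cases "\<exists>z. w = u @ z")
    case True
    then obtain z where "w = u @ z" by blast
    then show ?thesis
      using lmult_append[of "u @ u'" p] by (cases "\<exists>y. z = u' @ y") (auto simp: lmult_not_prefix)
  qed (auto simp: lmult_not_prefix)
qed

lemma rmult_rmult: "rmult (rmult p v) v' = rmult p (v @ v')"
proof
  fix w
  show "rmult (rmult p v) v' w = rmult p (v @ v') w"
  proof (cases "\<exists>z. w = z @ v'")
    case True
    then obtain z where "w = z @ v'" by blast
    then show ?thesis by (cases "\<exists>y. z = y @ v") (auto simp: rmult_not_suffix)
  qed (metis append_assoc rmult_not_suffix)
qed

lemma rmult_lmult_prefix: "rmult (lmult u p) v (u @ y) = rmult p v y"
proof (cases "\<exists>z. y = z @ v")
  case True
  then show ?thesis using rmult_append[of "lmult u p" v "u @ _"] by auto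
next
  case no_suffix: False
  have "rmult (lmult u p) v (u @ y) = 0"
  proof (cases "\<exists>x. u @ y = x @ v")
    case True
    then obtain x where x: "u @ y = x @ v" by blast
    with no_suffix have "\<nexists>z. x = u @ z" by auto
    with x show ?thesis by (simp add: lmult_not_prefix)
  qed (auto simp: rmult_not_suffix)
  with no_suffix show ?thesis by (auto simp: rmult_not_suffix)
qed

lemma lmult_rmult: "lmult u (rmult p v) = rmult (lmult u p) v"
proof
  fix w
  show "lmult u (rmult p v) w = rmult (lmult u p) v w"
  proof (cases "\<exists>y. w = u @ y")
    case False
    then show ?thesis
      by (metis append_assoc lmult_not_prefix rmult_append rmult_not_suffix)
  qed (auto simp: rmult_lmult_prefix)
qed

lemma pmul_smult_mono: "pmul (psmult c (mono u)) q = (\<lambda>w. c * lmult u q w)"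
proof
  fix w :: "'a list"
  have "pmul (psmult c (mono u)) q w =
        (\<Sum>i\<in>{0..length w}. if i = length u \<and> take (length u) w = u then c * q (drop i w) else 0)"
    unfolding pmul_def psmult_def mono_def
    by (rule sum.cong) (auto simp: min_def split: if_splits)
  also have "\<dots> = c * lmult u q w"
    by (auto simp: lmult_def sum.delta_remove if_distrib cong: if_cong dest!: arg_cong[of _ _ length])
  finally show "pmul (psmult c (mono u)) q w = c * lmult u q w" .
qed

lemma pmul_mono: "pmul q (mono v) = rmult q v"
proof
  fix w :: "'a list"
  have "pmul q (mono v) w =
        (\<Sum>i\<in>{0..length w}.
           if i = length w - length v \<and> drop (length w - length v) w = v then q (take i w) else 0)"
    unfolding pmul_def mono_def by (rule sum.cong) auto
  also have "\<dots> = rmult q v w"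
    by (simp add: rmult_def sum.delta_remove if_distrib cong: if_cong)
  finally show "pmul q (mono v) w = rmult q v w" .
qed

lemma lmult_mono [simp]: "lmult u (mono w) = mono (u @ w)"
  by (auto simp: lmult_def mono_def fun_eq_iff; metis append_take_drop_id)

lemma rmult_mono [simp]: "rmult (mono w) v = mono (w @ v)"
  by (auto simp: rmult_def mono_def fun_eq_iff; metis append_take_drop_id)

lemma lmult_add: "lmult u (p + q) = lmult u p + lmult u q"
  and lmult_smult: "lmult u (\<lambda>w. c * p w) = (\<lambda>w. c * lmult u p w)"
  by (auto simp: lmult_def fun_eq_iff)

lemma rmult_add: "rmult (p + q) v = rmult p v + rmult q v"
  and rmult_smult: "rmult (\<lambda>w. c * p w) v = (\<lambda>w. c * rmult p v w)"
  by (auto simp: rmult_def fun_eq_iff)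

lemma lmult_Nil [simp]: "lmult [] p = p"
  and rmult_Nil [simp]: "rmult p [] = p"
  by (simp_all add: lmult_def rmult_def)

lemma padd_eq_plus: "padd p q = p + q"
  by (simp add: padd_def plus_fun_def)

lemma two_sided_ideal_generator_multiple:
  assumes "r \<in> R"
  shows "(\<lambda>w. c * lmult u (rmult r v) w) \<in> two_sided_ideal R"
  using two_sided_ideal.gen[OF assms, of c u v]
  by (simp add: pmul_smult_mono pmul_mono rmult_smult lmult_rmult)

lemma two_sided_ideal_generator: "r \<in> R \<Longrightarrow> r \<in> two_sided_ideal R"
  using two_sided_ideal_generator_multiple[of r R 1 "[]" "[]"] by simp

lemma two_sided_ideal_zero: "0 \<in> two_sided_ideal R"
  using two_sided_ideal.zero by (simp add: zero_fun_def)

lemma two_sided_ideal_add: "p \<in> two_sided_ideal R \<Longrightarrow> q \<in> two_sided_ideal R \<Longrightarrow> p + q \<in> two_sided_ideal R"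
  using two_sided_ideal.add[of p R q] by (simp add: padd_eq_plus)

lemma two_sided_ideal_smult: "p \<in> two_sided_ideal R \<Longrightarrow> (\<lambda>w. c * p w) \<in> two_sided_ideal R"
proof (induction rule: two_sided_ideal.induct)
  case (gen r c' u v)
  then show ?case
    using two_sided_ideal_generator_multiple[OF gen, of "c * c'" u v]
    by (simp add: pmul_smult_mono pmul_mono rmult_smult lmult_rmult mult.assoc)
next
  case (add p q)
  then show ?case
    using two_sided_ideal_add by (simp add: padd_def plus_fun_def distrib_left)
qed (use two_sided_ideal.zero in simp)

lemma two_sided_ideal_lmult: "p \<in> two_sided_ideal R \<Longrightarrow> lmult u' p \<in> two_sided_ideal R"
proof (induction rule: two_sided_ideal.induct)
  case (gen r c u v)
  then show ?case
    using two_sided_ideal_generator_multiple[OF gen, of c "u' @ u" v]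
    by (simp add: pmul_smult_mono pmul_mono rmult_smult lmult_rmult lmult_smult lmult_lmult)
next
  case (add p q)
  then show ?case
    unfolding padd_eq_plus lmult_add by (intro two_sided_ideal_add)
qed (simp add: lmult_def two_sided_ideal.zero)

lemma two_sided_ideal_rmult: "p \<in> two_sided_ideal R \<Longrightarrow> rmult p v' \<in> two_sided_ideal R"
proof (induction rule: two_sided_ideal.induct)
  case (gen r c u v)
  then show ?case
    using two_sided_ideal_generator_multiple[OF gen, of c u "v @ v'"]
    by (simp add: pmul_smult_mono pmul_mono rmult_smult lmult_rmult rmult_rmult)
next
  case (add p q)
  then show ?case
    unfolding padd_eq_plus rmult_add by (intro two_sided_ideal_add)
qed (simp add: rmult_def two_sided_ideal.zero)

lemma two_sided_ideal_diff:
  assumes "p \<in> two_sided_ideal R" "q \<in> two_sided_ideal R"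
  shows "p - q \<in> two_sided_ideal R"
proof -
  have "- q \<in> two_sided_ideal R"
    using two_sided_ideal_smult[OF assms(2), of "-1"] by (simp add: fun_Compl_def)
  then show ?thesis
    using two_sided_ideal_add[OF assms(1)] by (metis diff_conv_add_uminus)
qed

lemma two_sided_ideal_sum:
  "(\<And>j. j \<in> A \<Longrightarrow> f j \<in> two_sided_ideal R) \<Longrightarrow> sum f A \<in> two_sided_ideal R"
  by (induction A rule: infinite_finite_induct) (auto intro: two_sided_ideal_add two_sided_ideal_zero)

section \<open>Congruence modulo a two-sided ideal\<close>

definition ideal_cong :: "('g, 'k::field) ncpoly set \<Rightarrow> ('g, 'k) ncpoly \<Rightarrow> ('g, 'k) ncpoly \<Rightarrow> bool" where
  "ideal_cong R p q \<longleftrightarrow> p - q \<in> two_sided_ideal R"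

lemma ideal_cong_refl [simp]: "ideal_cong R p p"
  by (simp add: ideal_cong_def two_sided_ideal_zero)

lemma ideal_cong_sym: "ideal_cong R p q \<Longrightarrow> ideal_cong R q p"
  unfolding ideal_cong_def using two_sided_ideal_diff[OF two_sided_ideal_zero] by fastforce

lemma ideal_cong_add:
  "ideal_cong R p p' \<Longrightarrow> ideal_cong R q q' \<Longrightarrow> ideal_cong R (p + q) (p' + q')"
  unfolding ideal_cong_def using two_sided_ideal_add by (fastforce simp: algebra_simps)

lemma ideal_cong_diff:
  "ideal_cong R p p' \<Longrightarrow> ideal_cong R q q' \<Longrightarrow> ideal_cong R (p - q) (p' - q')"
  unfolding ideal_cong_def using two_sided_ideal_diff by (fastforce simp: algebra_simps)

lemma ideal_cong_trans [trans]: "ideal_cong R p q \<Longrightarrow> ideal_cong R q r \<Longrightarrow> ideal_cong R p r"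
  unfolding ideal_cong_def using two_sided_ideal_add[of "p - q" R "q - r"] by simp

lemma eq_ideal_cong_trans [trans]: "p = q \<Longrightarrow> ideal_cong R q r \<Longrightarrow> ideal_cong R p r"
  and ideal_cong_eq_trans [trans]: "ideal_cong R p q \<Longrightarrow> q = r \<Longrightarrow> ideal_cong R p r"
  by simp_all

lemma ideal_cong_sum:
  "(\<And>j. j \<in> A \<Longrightarrow> ideal_cong R (f j) (g j)) \<Longrightarrow> ideal_cong R (sum f A) (sum g A)"
  unfolding ideal_cong_def sum_subtractf[symmetric] by (rule two_sided_ideal_sum)

lemma ideal_cong_generator: "r \<in> R \<Longrightarrow> ideal_cong R r 0"
  by (simp add: ideal_cong_def two_sided_ideal_generator)

lemma ideal_cong_zero_iff: "ideal_cong R p 0 \<longleftrightarrow> p \<in> two_sided_ideal R"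
  by (simp add: ideal_cong_def)

section \<open>The Fomin--Kirillov relations in antisymmetric form\<close>

definition fk_gen :: "nat \<times> nat \<Rightarrow> nat \<times> nat" where
  "fk_gen x = (min (fst x) (snd x), max (fst x) (snd x))"

definition edge_sign :: "nat \<times> nat \<Rightarrow> 'k::field" where
  "edge_sign x = (if fst x < snd x then 1 else -1)"

definition word_sign :: "(nat \<times> nat) list \<Rightarrow> 'k::field" where
  "word_sign l = prod_list (map edge_sign l)"

text \<open>With the antisymmetric convention \<open>x_ba = - x_ab\<close>, a list \<open>l\<close> of ordered pairs
  stands for the product of the \<open>x_e\<close>, \<open>e \<in> l\<close>.\<close>

definition signed_word :: "(nat \<times> nat) list \<Rightarrow> (nat \<times> nat, 'k::field) ncpoly" where
  "signed_word l = (\<lambda>w. word_sign l * mono (map fk_gen l) w)"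

definition sandwich ::
  "(nat \<times> nat) list \<Rightarrow> (nat \<times> nat, 'k::field) ncpoly \<Rightarrow> (nat \<times> nat) list \<Rightarrow> (nat \<times> nat, 'k) ncpoly" where
  "sandwich l p r = (\<lambda>w. word_sign l * word_sign r * lmult (map fk_gen l) (rmult p (map fk_gen r)) w)"

lemma word_sign_Nil [simp]: "word_sign [] = 1"
  and word_sign_Cons [simp]: "word_sign (x # l) = edge_sign x * word_sign l"
  and word_sign_append [simp]: "word_sign (l @ r) = word_sign l * word_sign r"
  by (simp_all add: word_sign_def)

lemma word_sign_nonzero: "word_sign l \<noteq> (0::'k::field)"
  by (induction l) (auto simp: edge_sign_def)

lemma sandwich_signed_word: "sandwich l (signed_word u) r = signed_word (l @ u @ r)"
  by (simp add: sandwich_def signed_word_def rmult_smult lmult_smult fun_eq_iff mult_ac)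

lemma sandwich_add: "sandwich l (p + q) r = sandwich l p r + sandwich l q r"
  and sandwich_diff: "sandwich l (p - q) r = sandwich l p r - sandwich l q r"
  and sandwich_zero: "sandwich l 0 r = 0"
  by (auto simp: sandwich_def lmult_def rmult_def fun_eq_iff algebra_simps)

lemma sandwich_sum: "sandwich l (sum f A) r = (\<Sum>j\<in>A. sandwich l (f j) r)"
  by (simp add: sandwich_def lmult_def rmult_def sum_fun_apply sum_distrib_left fun_eq_iff)

lemma ideal_cong_sandwich:
  assumes "ideal_cong R p q"
  shows "ideal_cong R (sandwich l p r) (sandwich l q r)"
  using assms unfolding ideal_cong_def sandwich_diff[symmetric] unfolding sandwich_def
  by (intro two_sided_ideal_smult two_sided_ideal_lmult two_sided_ideal_rmult)

lemma signed_word_swap: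
  "a \<noteq> b \<Longrightarrow> signed_word (l @ (b, a) # r) = - signed_word (l @ (a, b) # r)"
  by (cases "a < b") (auto simp: signed_word_def edge_sign_def fk_gen_def fun_eq_iff min_def max_def)

definition fk_edge :: "nat \<Rightarrow> nat \<times> nat \<Rightarrow> bool" where
  "fk_edge m x \<longleftrightarrow> fst x \<noteq> snd x \<and> fst x \<in> {1..m} \<and> snd x \<in> {1..m}"

lemma fk_gen_in_fk_gens: "fk_edge m x \<Longrightarrow> fk_gen x \<in> fk_gens m"
  by (auto simp: fk_edge_def fk_gen_def fk_gens_def min_def max_def)

lemma signed_word_pair:
  "signed_word [x, y] = (\<lambda>w. edge_sign x * edge_sign y * mono [fk_gen x, fk_gen y] w)"
  by (simp add: signed_word_def)

lemma fk_square_relation: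
  assumes "fk_edge m x"
  shows "ideal_cong (fk_rels m) (signed_word [x, x] :: (nat \<times> nat, 'k::field) ncpoly) 0"
proof -
  obtain i j where ij: "fk_gen x = (i, j)" by force
  have "(mono [fk_gen x, fk_gen x] :: (nat \<times> nat, 'k) ncpoly) \<in> fk_rels m"
    using fk_gen_in_fk_gens[OF assms] unfolding fk_rels_def ij by blast
  moreover have "signed_word [x, x] = (mono [fk_gen x, fk_gen x] :: (nat \<times> nat, 'k) ncpoly)"
    by (simp add: signed_word_pair edge_sign_def)
  ultimately show ?thesis by (simp add: ideal_cong_generator)
qed

lemma fk_commutation_relation:
  assumes "fk_edge m x" "fk_edge m y" "{fst x, snd x} \<inter> {fst y, snd y} = {}"
  shows "ideal_cong (fk_rels m) (signed_word [x, y] :: (nat \<times> nat, 'k::field) ncpoly) (signed_word [y, x])"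
proof -
  obtain i j where ij: "fk_gen x = (i, j)" by force
  obtain k l where kl: "fk_gen y = (k, l)" by force
  let ?r = "psub (mono [fk_gen x, fk_gen y]) (mono [fk_gen y, fk_gen x]) :: (nat \<times> nat, 'k) ncpoly"
  have "{i, j} \<inter> {k, l} = {}"
    using assms(3) ij kl by (auto simp: fk_gen_def min_def max_def split: if_splits)
  then have "?r \<in> fk_rels m"
    using fk_gen_in_fk_gens[OF assms(1)] fk_gen_in_fk_gens[OF assms(2)]
    unfolding fk_rels_def ij kl by blast
  then have "(\<lambda>w. edge_sign x * edge_sign y * ?r w) \<in> two_sided_ideal (fk_rels m)"
    by (intro two_sided_ideal_smult two_sided_ideal_generator)
  moreover have "signed_word [x, y] - signed_word [y, x] = (\<lambda>w. edge_sign x * edge_sign y * ?r w)"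
    by (simp add: signed_word_pair psub_def fun_eq_iff algebra_simps)
  ultimately show ?thesis
    by (simp add: ideal_cong_def)
qed

definition three_term :: "nat \<Rightarrow> nat \<Rightarrow> nat \<Rightarrow> (nat \<times> nat, 'k::field) ncpoly" where
  "three_term a b e =
     signed_word [(a, b), (b, e)] + signed_word [(b, e), (e, a)] + signed_word [(e, a), (a, b)]"

lemma three_term_rotate: "three_term a b e = three_term b e a"
  by (simp add: three_term_def add_ac)

text \<open>In the antisymmetric convention the two three-term relations of \<open>E_m\<close> become the same
  relation, read on an increasing and on a decreasing triple.\<close>

lemma fk_three_term_relation_monotone:
  assumes "1 \<le> i" "i < j" "j < k" "k \<le> m"
  shows "ideal_cong (fk_rels m) (three_term i j k :: (nat \<times> nat, 'k::field) ncpoly) 0"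
    and "ideal_cong (fk_rels m) (three_term k j i :: (nat \<times> nat, 'k::field) ncpoly) 0"
proof -
  have "(psub (psub (mono [(i, j), (j, k)]) (mono [(j, k), (i, k)])) (mono [(i, k), (i, j)])
      :: (nat \<times> nat, 'k) ncpoly) \<in> fk_rels m"
    using assms unfolding fk_rels_def by blast
  moreover have "three_term i j k =
      (psub (psub (mono [(i, j), (j, k)]) (mono [(j, k), (i, k)])) (mono [(i, k), (i, j)])
      :: (nat \<times> nat, 'k) ncpoly)"
    using assms by (simp add: three_term_def signed_word_pair psub_def fun_eq_iff edge_sign_def fk_gen_def)
  ultimately show "ideal_cong (fk_rels m) (three_term i j k :: (nat \<times> nat, 'k::field) ncpoly) 0"
    by (simp add: ideal_cong_generator)
next
  have "(psub (psub (mono [(j, k), (i, j)]) (mono [(i, k), (j, k)])) (mono [(i, j), (i, k)])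
      :: (nat \<times> nat, 'k) ncpoly) \<in> fk_rels m"
    using assms unfolding fk_rels_def by blast
  moreover have "three_term k j i =
      (psub (psub (mono [(j, k), (i, j)]) (mono [(i, k), (j, k)])) (mono [(i, j), (i, k)])
      :: (nat \<times> nat, 'k) ncpoly)"
    using assms by (simp add: three_term_def signed_word_pair psub_def fun_eq_iff edge_sign_def fk_gen_def)
  ultimately show "ideal_cong (fk_rels m) (three_term k j i :: (nat \<times> nat, 'k::field) ncpoly) 0"
    by (simp add: ideal_cong_generator)
qed

lemma fk_three_term_relation:
  assumes "a \<in> {1..m}" "b \<in> {1..m}" "e \<in> {1..m}" "a \<noteq> b" "b \<noteq> e" "a \<noteq> e"
  shows "ideal_cong (fk_rels m) (three_term a b e :: (nat \<times> nat, 'k::field) ncpoly) 0"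
proof -
  have rot: "three_term a b e = three_term b e a" "three_term a b e = three_term e a b"
    by (metis three_term_rotate)+
  note increasing = fk_three_term_relation_monotone(1)[where 'k='k and m=m]
  note decreasing = fk_three_term_relation_monotone(2)[where 'k='k and m=m]
  consider "a < b" "b < e" | "b < e" "e < a" | "e < a" "a < b"
    | "a < e" "e < b" | "e < b" "b < a" | "b < a" "a < e"
    using assms by linarith
  then show ?thesis
  proof cases
    case 1 then show ?thesis using increasing[of a b e] assms by simp
  next
    case 2 then show ?thesis using increasing[of b e a] assms unfolding rot(1) by simp
  next
    case 3 then show ?thesis using increasing[of e a b] assms unfolding rot(2) by simp
  next
    case 4 then show ?thesis using decreasing[of a e b] assms unfolding rot(1) by simp
  next
    case 5 then show ?thesis using decreasing[of e b a] assms by simp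
  next
    case 6 then show ?thesis using decreasing[of b a e] assms unfolding rot(2) by simp
  qed
qed

lemma signed_word_commute_past:
  assumes "fk_edge m e" "\<forall>x\<in>set l. fk_edge m x \<and> {fst e, snd e} \<inter> {fst x, snd x} = {}"
  shows "ideal_cong (fk_rels m)
           (signed_word (l1 @ e # l @ l2) :: (nat \<times> nat, 'k::field) ncpoly) (signed_word (l1 @ l @ e # l2))"
  using assms(2)
proof (induction l arbitrary: l1)
  case (Cons x l)
  have "ideal_cong (fk_rels m) (signed_word (l1 @ e # x # l @ l2) :: (nat \<times> nat, 'k) ncpoly)
          (signed_word (l1 @ x # e # l @ l2))"
    using ideal_cong_sandwich[OF fk_commutation_relation[OF assms(1)], of x l1 "l @ l2"] Cons.prems
    by (simp add: sandwich_signed_word)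
  also have "ideal_cong (fk_rels m) \<dots> (signed_word ((l1 @ [x]) @ l @ e # l2))"
    using Cons.IH[of "l1 @ [x]"] Cons.prems by simp
  finally show ?case by simp
qed simp

lemma fk_three_term_rewrite:
  assumes "c \<in> {1..m}" "a \<in> {1..m}" "b \<in> {1..m}" "a \<noteq> b" "a \<noteq> c" "b \<noteq> c"
  shows "ideal_cong (fk_rels m) (signed_word (l @ [(c, b), (c, a)] @ r) :: (nat \<times> nat, 'k::field) ncpoly)
           (signed_word (l @ [(c, a), (a, b)] @ r) - signed_word (l @ [(a, b), (c, b)] @ r))"
    (is "ideal_cong _ ?rot (?A - ?B)")
proof -
  have "signed_word (l @ [(a, b), (b, c)] @ r) = - ?B"
    using signed_word_swap[of c b "l @ [(a, b)]" r] assms by simp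
  moreover have "signed_word (l @ [(b, c), (c, a)] @ r) = - ?rot"
    using signed_word_swap[of c b l "(c, a) # r"] assms by simp
  ultimately have "sandwich l (three_term c a b) r = ?A - ?B - ?rot"
    unfolding three_term_def sandwich_add sandwich_signed_word by simp
  moreover have "ideal_cong (fk_rels m)
      (sandwich l (three_term c a b :: (nat \<times> nat, 'k) ncpoly) r) (sandwich l 0 r)"
    using assms by (intro ideal_cong_sandwich fk_three_term_relation) auto
  ultimately have "ideal_cong (fk_rels m) 0 (?A - ?B - ?rot)"
    by (simp add: sandwich_zero ideal_cong_sym)
  then show ?thesis
    unfolding ideal_cong_def by (simp add: algebra_simps)
qed

section \<open>Cyclic relations for a star\<close>

text \<open>For \<open>C = [v_1, ..., v_k]\<close>, \<open>cyclic_window C j\<close> is the segment of length \<open>k + 1\<close> of the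
  periodic sequence \<open>v_1 v_2 ... v_k v_1 v_2 ...\<close> that starts (and ends) at \<open>v_(j+1)\<close>.\<close>

definition cyclic_window :: "'a list \<Rightarrow> nat \<Rightarrow> 'a list" where
  "cyclic_window C j = drop j (butlast C) @ [last C, hd C] @ take j (tl C)"

definition cyclic_relation :: "nat \<Rightarrow> nat list \<Rightarrow> (nat \<times> nat, 'k::field) ncpoly" where
  "cyclic_relation c C = (\<Sum>j<length C. signed_word (map (Pair c) (cyclic_window C j)))"

lemma cyclic_window_Cons_snoc:
  "cyclic_window (a # M @ [b]) j = drop j (a # M) @ [b, a] @ take j (M @ [b])"
  by (simp add: cyclic_window_def butlast_append)

lemma cyclic_window_Cons:
  assumes "j \<le> length M"
  shows "cyclic_window (a # M) j = drop j (a # M) @ [a] @ take j (M @ [b])"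
proof -
  have "drop j (butlast (a # M)) @ [last (a # M)] = drop j (a # M)"
    using assms
    by (metis append_butlast_last_id butlast_drop last_drop drop_eq_Nil2 length_Cons less_Suc_eq_le not_le)
  then show ?thesis
    using assms by (simp add: cyclic_window_def)
qed

lemma cyclic_window_snoc:
  "cyclic_window (M @ [b]) j = drop (Suc j) (a # M) @ [b] @ take (Suc j) (M @ [b])"
  by (cases M) (simp_all add: cyclic_window_def)

lemma cyclic_window_0: "C \<noteq> [] \<Longrightarrow> cyclic_window C 0 = C @ [hd C]"
  by (simp add: cyclic_window_def)

lemma length_cyclic_window: "j < length C \<Longrightarrow> length (cyclic_window C j) = Suc (length C)"
  by (cases C) (auto simp: cyclic_window_def min_def)

lemma set_cyclic_window: "C \<noteq> [] \<Longrightarrow> set (cyclic_window C j) \<subseteq> set C"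
  unfolding cyclic_window_def
  by (auto dest: in_set_dropD in_set_takeD in_set_butlastD list.set_sel(2))

lemma cyclic_window_last:
  assumes "1 \<le> j" "j < length C"
  obtains Z where "cyclic_window C j = Z @ [C ! j]"
proof -
  obtain x C' where C: "C = x # C'" using assms by (cases C) auto
  have "take j C' = take (j - 1) C' @ [C' ! (j - 1)]"
    using assms C take_Suc_conv_app_nth[of "j - 1" C'] by simp
  then show ?thesis
    using that C assms by (simp add: cyclic_window_def)
qed

text \<open>Every window of \<open>a # M @ [b]\<close> contains \<open>x_cb x_ca\<close>. The three-term relation replaces it
  by \<open>x_ca x_ab - x_ab x_cb\<close>; moving \<open>x_ab\<close> to the end, resp. the front, of the word
  turns the two resulting sums into the windows of \<open>a # M\<close> and of \<open>M @ [b]\<close>, up to one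
  pair of terms that cancel.\<close>

lemma cyclic_relation_step:
  assumes c: "c \<in> {1..m}"
    and dist: "distinct (a # M @ [b])"
    and leaves: "\<forall>v\<in>set (a # M @ [b]). v \<in> {1..m} \<and> v \<noteq> c"
  shows "ideal_cong (fk_rels m) (cyclic_relation c (a # M @ [b]) :: (nat \<times> nat, 'k::field) ncpoly)
           (sandwich [] (cyclic_relation c (a # M)) [(a, b)]
             - sandwich [(a, b)] (cyclic_relation c (M @ [b])) [])"
proof -
  define K where "K = Suc (length M)"
  define t where "t = (a, b)"
  define P where "P j = map (Pair c) (drop j (a # M))" for j
  define Q where "Q j = map (Pair c) (take j (M @ [b]))" for j
  define A :: "nat \<Rightarrow> (nat \<times> nat, 'k) ncpoly" where "A j = signed_word (P j @ [(c, a), t] @ Q j)" for j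
  define B :: "nat \<Rightarrow> (nat \<times> nat, 'k) ncpoly" where "B j = signed_word (P j @ [t, (c, b)] @ Q j)" for j
  have ab: "a \<noteq> b" "a \<in> {1..m}" "b \<in> {1..m}" "a \<noteq> c" "b \<noteq> c"
    using dist leaves by auto
  have t: "fk_edge m t"
    using ab by (simp add: fk_edge_def t_def)
  have disjoint: "\<forall>x\<in>set (map (Pair c) N). fk_edge m x \<and> {fst t, snd t} \<inter> {fst x, snd x} = {}"
    if "set N \<subseteq> set M" for N
    using that dist leaves c by (auto simp: fk_edge_def t_def)
  have "(cyclic_relation c (a # M @ [b]) :: (nat \<times> nat, 'k) ncpoly) =
      (\<Sum>j<Suc K. signed_word (P j @ [(c, b), (c, a)] @ Q j))"
    unfolding cyclic_relation_def P_def Q_def K_def by (simp add: cyclic_window_Cons_snoc)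
  also have "ideal_cong (fk_rels m) \<dots> (\<Sum>j<Suc K. A j - B j)"
    unfolding A_def B_def t_def using c ab by (intro ideal_cong_sum fk_three_term_rewrite) auto
  also have "(\<Sum>j<Suc K. A j - B j) = (\<Sum>j<K. A j) + A K - (B 0 + (\<Sum>j<K. B (Suc j)))"
    by (simp only: sum_subtractf sum.lessThan_Suc[of A K] sum.lessThan_Suc_shift[of B K])
  also have "ideal_cong (fk_rels m) \<dots>
      ((\<Sum>j<K. signed_word (map (Pair c) (cyclic_window (a # M) j) @ [t])) + B 0
        - (B 0 + (\<Sum>j<K. signed_word (t # map (Pair c) (cyclic_window (M @ [b]) j)))))"
  proof (intro ideal_cong_add ideal_cong_diff ideal_cong_sum ideal_cong_refl)
    fix j assume "j \<in> {..<K}"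
    then have j: "j \<le> length M" by (simp add: K_def)
    show "ideal_cong (fk_rels m) (A j) (signed_word (map (Pair c) (cyclic_window (a # M) j) @ [t]))"
      using signed_word_commute_past[OF t disjoint, of "take j M" "P j @ [(c, a)]" "[]"] j
      by (simp add: A_def P_def Q_def cyclic_window_Cons[OF j, of a b] set_take_subset)
    show "ideal_cong (fk_rels m) (B (Suc j)) (signed_word (t # map (Pair c) (cyclic_window (M @ [b]) j)))"
      using ideal_cong_sym[OF signed_word_commute_past[OF t disjoint,
            of "drop j M" "[]" "(c, b) # Q (Suc j)"]]
      by (simp add: B_def P_def Q_def cyclic_window_snoc[of M b j a] set_drop_subset)
  next
    show "ideal_cong (fk_rels m) (A K) (B 0)"
      using signed_word_commute_past[OF t disjoint, of M "[(c, a)]" "[(c, b)]"]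
      by (simp add: A_def B_def P_def Q_def K_def)
  qed
  also have "\<dots> = sandwich [] (cyclic_relation c (a # M)) [t] - sandwich [t] (cyclic_relation c (M @ [b])) []"
    by (simp add: cyclic_relation_def sandwich_sum sandwich_signed_word K_def del: sum.lessThan_Suc)
  finally show ?thesis
    by (simp add: t_def)
qed

lemma cyclic_relation_in_fk_ideal:
  assumes "c \<in> {1..m}" "distinct C" "C \<noteq> []" "\<forall>v\<in>set C. v \<in> {1..m} \<and> v \<noteq> c"
  shows "(cyclic_relation c C :: (nat \<times> nat, 'k::field) ncpoly) \<in> fk_ideal m"
  using assms(2-)
proof (induction "length C" arbitrary: C rule: less_induct)
  case less
  obtain a C' where C: "C = a # C'"
    using less.prems by (cases C) auto
  show ?case
  proof (cases "C' = []")
    case True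
    have "fk_edge m (c, a)"
      using less.prems assms(1) C by (auto simp: fk_edge_def)
    then show ?thesis
      using fk_square_relation[where 'k='k]
      by (simp add: C True cyclic_relation_def cyclic_window_def fk_ideal_def ideal_cong_zero_iff)
  next
    case False
    then obtain M b where C: "C = a # M @ [b]"
      using C by (metis rev_exhaust)
    have "ideal_cong (fk_rels m) (cyclic_relation c C :: (nat \<times> nat, 'k) ncpoly)
        (sandwich [] (cyclic_relation c (a # M)) [(a, b)]
          - sandwich [(a, b)] (cyclic_relation c (M @ [b])) [])"
      using cyclic_relation_step assms(1) less.prems unfolding C by blast
    also have "ideal_cong (fk_rels m) \<dots> (sandwich [] 0 [(a, b)] - sandwich [(a, b)] 0 [])"
      using less.hyps[of "a # M"] less.hyps[of "M @ [b]"] less.prems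
      by (intro ideal_cong_diff ideal_cong_sandwich) (auto simp: C fk_ideal_def ideal_cong_zero_iff)
    finally show ?thesis
      by (simp add: sandwich_zero fk_ideal_def ideal_cong_zero_iff)
  qed
qed

section \<open>Truncated point modules\<close>

definition basis_vec :: "nat \<Rightarrow> nat \<Rightarrow> 'k::field" where
  "basis_vec i = (\<lambda>j. if j = i then 1 else 0)"

fun word_coeff :: "(nat \<Rightarrow> 'g \<Rightarrow> 'k::field) \<Rightarrow> nat \<Rightarrow> 'g list \<Rightarrow> 'k" where
  "word_coeff a i [] = 1"
| "word_coeff a i (x # w) = a (i + length w) x * word_coeff a i w"

lemma word_act_basis_vec:
  assumes "i \<le> d"
  shows "word_act a d w (basis_vec i) =
    (if i + length w \<le> d then (\<lambda>j. word_coeff a i w * basis_vec (i + length w) j) else (\<lambda>_. 0))"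
proof (induction w)
  case Nil
  then show ?case using assms by (simp add: word_act_def)
next
  case (Cons x w)
  then show ?case
    by (auto simp: word_act_def gen_act_def basis_vec_def fun_eq_iff)
qed

lemma word_coeff_snoc: "word_coeff a i (w @ [x]) = a i x * word_coeff a (Suc i) w"
  by (induction w) auto

lemma word_coeff_map_rev: "word_coeff a i (map h (rev xs)) = (\<Prod>t<length xs. a (i + t) (h (xs ! t)))"
proof (induction xs arbitrary: i)
  case (Cons x xs)
  then show ?case
    by (simp add: word_coeff_snoc prod.lessThan_Suc_shift del: prod.lessThan_Suc)
qed simp

lemma poly_act_superset_support:
  assumes "finite A" "{w. f w \<noteq> 0} \<subseteq> A"
  shows "poly_act a d f v x = (\<Sum>w\<in>A. f w * word_act a d w v x)"
  unfolding poly_act_def using assms by (intro sum.mono_neutral_left) auto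

lemma signed_word_sum_support:
  "(\<Sum>j\<in>J. signed_word (L j) :: (nat \<times> nat, 'k::field) ncpoly) w \<noteq> 0 \<Longrightarrow> w \<in> (\<lambda>j. map fk_gen (L j)) ` J"
  by (auto simp: sum_fun_apply signed_word_def mono_def elim: sum.not_neutral_contains_not_neutral
      split: if_splits)

lemma poly_act_sum_signed_words:
  assumes "finite J"
  shows "poly_act a d (\<Sum>j\<in>J. signed_word (L j) :: (nat \<times> nat, 'k::field) ncpoly) v x =
         (\<Sum>j\<in>J. word_sign (L j) * word_act a d (map fk_gen (L j)) v x)"
proof -
  let ?A = "(\<lambda>j. map fk_gen (L j)) ` J"
  have "poly_act a d (\<Sum>j\<in>J. signed_word (L j)) v x =
      (\<Sum>w\<in>?A. (\<Sum>j\<in>J. signed_word (L j) :: (nat \<times> nat, 'k) ncpoly) w * word_act a d w v x)"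
    using assms signed_word_sum_support by (intro poly_act_superset_support) blast+
  also have "\<dots> = (\<Sum>j\<in>J. \<Sum>w\<in>?A. signed_word (L j) w * word_act a d w v x)"
    by (simp add: sum_fun_apply sum_distrib_right sum.swap[of _ ?A])
  also have "\<dots> = (\<Sum>j\<in>J. word_sign (L j) * word_act a d (map fk_gen (L j)) v x)"
  proof (rule sum.cong[OF refl])
    fix j assume "j \<in> J"
    have "(\<Sum>w\<in>?A. signed_word (L j) w * word_act a d w v x) =
        (\<Sum>w\<in>?A. if w = map fk_gen (L j) then word_sign (L j) * word_act a d w v x else 0)"
      by (intro sum.cong) (auto simp: signed_word_def mono_def)
    also have "\<dots> = word_sign (L j) * word_act a d (map fk_gen (L j)) v x"
      using assms \<open>j \<in> J\<close> by (simp add: sum.delta)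
    finally show "(\<Sum>w\<in>?A. signed_word (L j) w * word_act a d w v x) =
        word_sign (L j) * word_act a d (map fk_gen (L j)) v x" .
  qed
  finally show ?thesis .
qed

lemma cyclic_relation_in_free_alg:
  assumes "C \<noteq> []" "\<forall>u\<in>set C. fk_gen (c, u) \<in> E"
  shows "(cyclic_relation c C :: (nat \<times> nat, 'k::field) ncpoly) \<in> free_alg E"
proof -
  let ?A = "(\<lambda>j. map fk_gen (map (Pair c) (cyclic_window C j))) ` {..<length C}"
  have support: "{w. (cyclic_relation c C :: (nat \<times> nat, 'k) ncpoly) w \<noteq> 0} \<subseteq> ?A"
    unfolding cyclic_relation_def
    using signed_word_sum_support[where 'k='k and L="\<lambda>j. map (Pair c) (cyclic_window C j)"] by blast
  moreover have "set w \<subseteq> E" if "w \<in> ?A" for w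
    using that set_cyclic_window[OF assms(1)] assms(2) by fastforce
  ultimately show ?thesis
    unfolding free_alg_def by (auto intro: finite_subset)
qed

lemma truncated_point_module_relation_acts_trivially:
  assumes "truncated_point_module m E d a" "f \<in> free_alg E" "f \<in> fk_ideal m" "i \<le> d"
  shows "poly_act a d f (basis_vec i) = (\<lambda>_. 0)"
  using assms by (auto simp: truncated_point_module_def subalg_rel_ideal_def Mspace_def basis_vec_def)

lemma truncated_point_module_step_nonzero:
  assumes "truncated_point_module m E d (a :: nat \<Rightarrow> nat \<times> nat \<Rightarrow> 'k::field)" "s < d"
  obtains x where "x \<in> E" "a s x \<noteq> 0"
proof -
  have "\<exists>x\<in>E. a s x \<noteq> 0"
  proof (rule ccontr)
    assume "\<not> (\<exists>x\<in>E. a s x \<noteq> 0)"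
    then have vanish: "a s x = 0" if "x \<in> E" for x
      using that by blast
    have "basis_vec (Suc s) \<in> Mspace d"
      using assms(2) by (simp add: Mspace_def basis_vec_def)
    moreover have "deg0_gen = (basis_vec 0 :: nat \<Rightarrow> 'k)"
      by (simp add: deg0_gen_def basis_vec_def fun_eq_iff)
    ultimately obtain f where f: "f \<in> free_alg E"
      and gen: "basis_vec (Suc s) = poly_act a d f (basis_vec 0)"
      using assms(1) unfolding truncated_point_module_def by metis
    have "word_act a d w (basis_vec 0) (Suc s) = 0" if "f w \<noteq> 0" for w
    proof (cases "length w = Suc s")
      case True
      then obtain x w' where w: "w = x # w'" "length w' = s"
        by (cases w) auto
      moreover have "x \<in> E"
        using f \<open>f w \<noteq> 0\<close> w unfolding free_alg_def by auto
      ultimately show ?thesis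
        using word_act_basis_vec[of 0 d a w] vanish by simp
    next
      case False
      then show ?thesis
        using word_act_basis_vec[of 0 d a w] by (simp add: basis_vec_def)
    qed
    then have "poly_act a d f (basis_vec 0) (Suc s) = 0"
      by (simp add: poly_act_def)
    with gen show False
      by (metis basis_vec_def one_neq_zero)
  qed
  with that show thesis
    by blast
qed

lemma star_edges_fk_gen: "u \<in> {1..n + 1} \<Longrightarrow> u \<noteq> c \<Longrightarrow> fk_gen (c, u) \<in> star_edges n c"
  by (auto simp: star_edges_def fk_gen_def)

lemma star_point_module_leaf_walk:
  assumes "truncated_point_module (n + 1) (star_edges n c) d (a :: nat \<Rightarrow> nat \<times> nat \<Rightarrow> 'k::field)"
  obtains \<phi> where "\<And>s. s < d \<Longrightarrow> \<phi> s \<in> {1..n + 1} - {c} \<and> a s (fk_gen (c, \<phi> s)) \<noteq> 0"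
proof -
  have "\<exists>u \<in> {1..n + 1} - {c}. a s (fk_gen (c, u)) \<noteq> 0" if s: "s < d" for s
  proof -
    obtain x where "x \<in> star_edges n c" "a s x \<noteq> 0"
      using truncated_point_module_step_nonzero[OF assms s] .
    then show ?thesis
      by (auto simp: star_edges_def fk_gen_def)
  qed
  then show ?thesis
    using that by metis
qed

lemma cyclic_relation_acts_nonzero:
  fixes a :: "nat \<Rightarrow> nat \<times> nat \<Rightarrow> 'k::field" and g :: "nat \<Rightarrow> nat"
  assumes k: "1 \<le> k" "i + k < d" and closed: "g k = g 0"
    and walk: "\<And>t. t \<le> k \<Longrightarrow> a (i + t) (fk_gen (c, g t)) \<noteq> 0"
    and blocked: "\<And>t. 1 \<le> t \<Longrightarrow> t < k \<Longrightarrow> a i (fk_gen (c, g t)) = 0"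
  shows "poly_act a d (cyclic_relation c (rev (map g [1..<Suc k]))) (basis_vec i) (i + Suc k) \<noteq> 0"
proof -
  define C where "C = rev (map g [1..<Suc k])"
  define L where "L j = map (Pair c) (cyclic_window C j)" for j
  have C: "length C = k" "C \<noteq> []"
    using k by (auto simp: C_def)
  have act: "word_act a d (map fk_gen (L j)) (basis_vec i) (i + Suc k) = word_coeff a i (map fk_gen (L j))"
    if "j < k" for j
    using that k C word_act_basis_vec[of i d a "map fk_gen (L j)"]
    by (simp add: L_def length_cyclic_window basis_vec_def)
  have "hd C = g 0"
    using k closed by (simp add: C_def hd_rev)
  then have "C @ [hd C] = rev (map g [0..<Suc k])"
    by (simp add: C_def upt_conv_Cons del: upt_Suc)
  then have "word_coeff a i (map fk_gen (L 0)) =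
      word_coeff a i (map (fk_gen \<circ> Pair c) (rev (map g [0..<Suc k])))"
    using C by (simp add: L_def cyclic_window_0 del: upt_Suc)
  also have "\<dots> = (\<Prod>t<Suc k. a (i + t) (fk_gen (c, g t)))"
    unfolding word_coeff_map_rev by (intro prod.cong) (simp_all del: upt_Suc)
  finally have first: "word_coeff a i (map fk_gen (L 0)) \<noteq> 0"
    using walk by simp
  have others: "word_coeff a i (map fk_gen (L j)) = 0" if j: "1 \<le> j" "j < k" for j
  proof -
    obtain Z where "cyclic_window C j = Z @ [C ! j]"
      using cyclic_window_last j C by metis
    moreover have "C ! j = g (k - j)"
      using j by (simp add: C_def rev_nth nth_upt Suc_diff_Suc)
    ultimately show ?thesis
      using blocked[of "k - j"] j by (simp add: L_def word_coeff_snoc)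
  qed
  have "poly_act a d (cyclic_relation c C) (basis_vec i) (i + Suc k) =
      (\<Sum>j<k. word_sign (L j) * word_coeff a i (map fk_gen (L j)))"
    unfolding cyclic_relation_def L_def[symmetric] C(1) poly_act_sum_signed_words[OF finite_lessThan]
    using act by simp
  also have "\<dots> = word_sign (L 0) * word_coeff a i (map fk_gen (L 0))"
    using k others by (subst sum.mono_neutral_right[of "{..<k}" "{0}"]) auto
  also have "\<dots> \<noteq> 0"
    using first word_sign_nonzero by simp
  finally show ?thesis
    by (simp add: C_def)
qed

lemma star_point_module_leaf_not_reused:
  fixes a :: "nat \<Rightarrow> nat \<times> nat \<Rightarrow> 'k::field"
  assumes module: "truncated_point_module (n + 1) (star_edges n c) d a" and c: "c \<in> {1..n + 1}"
  shows "1 \<le> k \<Longrightarrow> i + k < d \<Longrightarrow> v \<in> {1..n + 1} - {c} \<Longrightarrow> a i (fk_gen (c, v)) \<noteq> 0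
    \<Longrightarrow> a (i + k) (fk_gen (c, v)) = 0"
proof (induction k arbitrary: i v rule: less_induct)
  case (less k)
  show ?case
  proof (rule ccontr)
    assume reused: "a (i + k) (fk_gen (c, v)) \<noteq> 0"
    obtain \<phi> where \<phi>: "\<And>s. s < d \<Longrightarrow> \<phi> s \<in> {1..n + 1} - {c} \<and> a s (fk_gen (c, \<phi> s)) \<noteq> 0"
      using star_point_module_leaf_walk[OF module] by blast
    define g where "g t = (if t = 0 \<or> t = k then v else \<phi> (i + t))" for t
    have walk: "g t \<in> {1..n + 1} - {c} \<and> a (i + t) (fk_gen (c, g t)) \<noteq> 0" if "t \<le> k" for t
      using \<phi>[of "i + t"] that less.prems reused by (auto simp: g_def)
    have blocked: "a i (fk_gen (c, g t)) = 0" if "1 \<le> t" "t < k" for t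
      using less.IH[of t i "g t"] walk[of t] that less.prems by auto
    have "inj_on g {1..<Suc k}"
    proof (rule inj_onI, rule ccontr)
      have no_repeat: "g s \<noteq> g t" if "1 \<le> s" "s < t" "t \<le> k" for s t
      proof -
        have "a (i + s + (t - s)) (fk_gen (c, g s)) = 0"
          using walk[of s] that less.prems by (intro less.IH) auto
        then show ?thesis
          using walk[of t] that by auto
      qed
      fix s t assume "s \<in> {1..<Suc k}" "t \<in> {1..<Suc k}" "g s = g t" "s \<noteq> t"
      then show False
        using no_repeat[of s t] no_repeat[of t s] by (auto simp: neq_iff)
    qed
    then have C: "distinct (rev (map g [1..<Suc k]))"
      by (simp add: distinct_map del: upt_Suc)
    have leaves: "\<forall>u\<in>set (rev (map g [1..<Suc k])). u \<in> {1..n + 1} \<and> u \<noteq> c"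
    proof
      fix u assume "u \<in> set (rev (map g [1..<Suc k]))"
      then obtain t where "t \<le> k" "u = g t"
        by (auto simp del: upt_Suc simp: less_Suc_eq_le)
      then show "u \<in> {1..n + 1} \<and> u \<noteq> c"
        using walk by auto
    qed
    have "rev (map g [1..<Suc k]) \<noteq> []"
      using less.prems by simp
    then have "poly_act a d (cyclic_relation c (rev (map g [1..<Suc k]))) (basis_vec i) = (\<lambda>_. 0)"
      using C leaves c less.prems star_edges_fk_gen
      by (intro truncated_point_module_relation_acts_trivially[OF module]
          cyclic_relation_in_free_alg cyclic_relation_in_fk_ideal) auto
    moreover have "poly_act a d (cyclic_relation c (rev (map g [1..<Suc k]))) (basis_vec i) (i + Suc k) \<noteq> 0"
      using less.prems walk blocked by (intro cyclic_relation_acts_nonzero) (auto simp: g_def)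
    ultimately show False
      by simp
  qed
qed

lemma star_point_module_degree_le:
  assumes module: "truncated_point_module (n + 1) (star_edges n c) d (a :: nat \<Rightarrow> nat \<times> nat \<Rightarrow> 'k::field)"
    and c: "c \<in> {1..n + 1}"
  shows "d \<le> n"
proof (rule ccontr)
  assume "\<not> d \<le> n"
  then have d: "n < d" by simp
  obtain \<phi> where \<phi>: "\<And>s. s < d \<Longrightarrow> \<phi> s \<in> {1..n + 1} - {c} \<and> a s (fk_gen (c, \<phi> s)) \<noteq> 0"
    using star_point_module_leaf_walk[OF module] by blast
  have "\<phi> s \<noteq> \<phi> t" if "s < t" "t \<le> n" for s t
  proof -
    have "a (s + (t - s)) (fk_gen (c, \<phi> s)) = 0"
      using \<phi>[of s] that d by (intro star_point_module_leaf_not_reused[OF module c]) auto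
    then show ?thesis
      using \<phi>[of t] that d by auto
  qed
  then have inj: "inj_on \<phi> {0..n}"
    by (metis inj_onI atLeastAtMost_iff linorder_neqE_nat)
  have "\<phi> ` {0..n} \<subseteq> {1..n + 1} - {c}"
    using d by (intro image_subsetI \<phi>[THEN conjunct1]) auto
  then have "card (\<phi> ` {0..n}) \<le> n"
    using card_mono[of "{1..n + 1} - {c}"] c by fastforce
  moreover have "card (\<phi> ` {0..n}) = n + 1"
    using inj by (simp add: card_image)
  ultimately show False
    by simp
qed

theorem proposition3p3:
  fixes n c d :: nat
  assumes "alg_closed TYPE('k::field)"
    and "c \<in> {1..n+1}"
    and "d \<ge> n + 1"
  shows "point_modules TYPE('k) (n + 1) (star_edges n c) d = {}"
  using star_point_module_degree_le[where 'k='k, OF _ assms(2)] assms(3)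
  by (fastforce simp: point_modules_def)

end
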